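(* Let $Q$ be a quadrilateral in $K^2$ and let $f:K^2\to K^2$ be an invertible linear transformation. There is $\lambda\in K$ such that for all $\mathbf v,\mathbf w\in K^2$, $$\langle \mathbf v,\mathbf w\rangle_Q=\lambda\langle f(\mathbf v),f(\mathbf w)\rangle_{f(Q)}.$$ Thus a pair of lines $\ell_1,\ell_2$ is $Q$-orthogonal if and only if $f(\ell_1),f(\ell_2)$ is $f(Q)$-orthogonal.
   Context: $K$ is a field of characteristic $\neq 2$. Every line $L$ in $K^2$ has an equation $tX-uY+v=0$ normalized so that $t=1$ if $u=0$ and $u=1$ if $u\neq 0$; coefficients denoted $t_L,u_L,v_L$. A quadrilateral $Q=ABA'B'$ consists of four distinct lines $A,B,A',B'$ (sides), not all through one point, with adjacent sides ($A,B$; $B,A'$; $A',B'$; $B',A$) not parallel; opposite sides may be parallel (three sides may be concurrent). $f(Q)$ denotes the quadrilateral $f(A)f(B)f(A')f(B')$. For $Q=ABA'B'$ let $\alpha=t_Au_Bu_{A'}u_{B'}-u_At_Bu_{A'}u_{B'}+u_Au_Bt_{A'}u_{B'}-u_Au_Bu_{A'}t_{B'}$, $\beta=t_Au_Bt_{A'}u_{B'}-u_At_Bu_{A'}t_{B'}$, $\gamma=t_At_Bt_{A'}u_{B'}-t_At_Bu_{A'}t_{B'}+t_Au_Bt_{A'}t_{B'}-u_At_Bt_{A'}t_{B'}$, and $\langle \mathbf v,\mathbf w\rangle_Q=\mathbf v^T\begin{pmatrix}\gamma&-\beta\\-\beta&\alpha\end{pmatrix}\mathbf w$. Lines $\ell_1,\ell_2$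 are $Q$-orthogonal if $\langle (u_{\ell_1},t_{\ell_1}),(u_{\ell_2},t_{\ell_2})\rangle_Q=0$. *)

theory Defs
  imports Main
begin

definition line_eq :: "'a::field \<Rightarrow> 'a \<Rightarrow> 'a \<Rightarrow> ('a \<times> 'a) set" where
  "line_eq t u v = {(x, y). t * x - u * y + v = 0}"

definition is_line :: "('a::field \<times> 'a) set \<Rightarrow> bool" where
  "is_line L \<longleftrightarrow> (\<exists>t u v. (t \<noteq> 0 \<or> u \<noteq> 0) \<and> L = line_eq t u v)"

definition normalized :: "'a::field \<Rightarrow> 'a \<Rightarrow> bool" where
  "normalized t u \<longleftrightarrow> (if u = 0 then t = 1 else u = 1)"

definition line_coeffs :: "('a::field \<times> 'a) set \<Rightarrow> 'a \<times> 'a \<times> 'a" where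
  "line_coeffs L = (THE (t, u, v). normalized t u \<and> L = line_eq t u v)"

definition t_of :: "('a::field \<times> 'a) set \<Rightarrow> 'a" where
  "t_of L = fst (line_coeffs L)"
definition u_of :: "('a::field \<times> 'a) set \<Rightarrow> 'a" where
  "u_of L = fst (snd (line_coeffs L))"
definition v_of :: "('a::field \<times> 'a) set \<Rightarrow> 'a" where
  "v_of L = snd (snd (line_coeffs L))"

definition parallel :: "('a \<times> 'a) set \<Rightarrow> ('a \<times> 'a) set \<Rightarrow> bool" where
  "parallel L M \<longleftrightarrow> L = M \<or> L \<inter> M = {}"

definition quadrilateral ::
  "('a::field \<times> 'a) set \<Rightarrow> ('a \<times> 'a) set \<Rightarrow> ('a \<times> 'a) set \<Rightarrow> ('a \<times> 'a) set \<Rightarrow> bool" where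
  "quadrilateral A B A' B' \<longleftrightarrow>
     is_line A \<and> is_line B \<and> is_line A' \<and> is_line B' \<and>
     distinct [A, B, A', B'] \<and>
     A \<inter> B \<inter> A' \<inter> B' = {} \<and>
     \<not> parallel A B \<and> \<not> parallel B A' \<and> \<not> parallel A' B' \<and> \<not> parallel B' A"

definition q_alpha :: "('a::field \<times> 'a) set \<Rightarrow> ('a \<times> 'a) set \<Rightarrow> ('a \<times> 'a) set \<Rightarrow> ('a \<times> 'a) set \<Rightarrow> 'a" where
  "q_alpha A B A' B' =
     t_of A * u_of B * u_of A' * u_of B' - u_of A * t_of B * u_of A' * u_of B'
   + u_of A * u_of B * t_of A' * u_of B' - u_of A * u_of B * u_of A' * t_of B'"

definition q_beta :: "('a::field \<times> 'a) set \<Rightarrow> ('a \<times> 'a) set \<Rightarrow> ('a \<times> 'a) set \<Rightarrow> ('a \<times> 'a) set \<Rightarrow> 'a" where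
  "q_beta A B A' B' =
     t_of A * u_of B * t_of A' * u_of B' - u_of A * t_of B * u_of A' * t_of B'"

definition q_gamma :: "('a::field \<times> 'a) set \<Rightarrow> ('a \<times> 'a) set \<Rightarrow> ('a \<times> 'a) set \<Rightarrow> ('a \<times> 'a) set \<Rightarrow> 'a" where
  "q_gamma A B A' B' =
     t_of A * t_of B * t_of A' * u_of B' - t_of A * t_of B * u_of A' * t_of B'
   + t_of A * u_of B * t_of A' * t_of B' - u_of A * t_of B * t_of A' * t_of B'"

definition q_form ::
  "('a::field \<times> 'a) set \<Rightarrow> ('a \<times> 'a) set \<Rightarrow> ('a \<times> 'a) set \<Rightarrow> ('a \<times> 'a) set \<Rightarrow> 'a \<times> 'a \<Rightarrow> 'a \<times> 'a \<Rightarrow> 'a" where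
  "q_form A B A' B' v w =
     (let \<alpha> = q_alpha A B A' B'; \<beta> = q_beta A B A' B'; \<gamma> = q_gamma A B A' B' in
      fst v * (\<gamma> * fst w - \<beta> * snd w) + snd v * (- \<beta> * fst w + \<alpha> * snd w))"

definition q_orthogonal ::
  "('a::field \<times> 'a) set \<Rightarrow> ('a \<times> 'a) set \<Rightarrow> ('a \<times> 'a) set \<Rightarrow> ('a \<times> 'a) set \<Rightarrow>
   ('a \<times> 'a) set \<Rightarrow> ('a \<times> 'a) set \<Rightarrow> bool" where
  "q_orthogonal A B A' B' l1 l2 \<longleftrightarrow>
     q_form A B A' B' (u_of l1, t_of l1) (u_of l2, t_of l2) = 0"

definition invertible_linear :: "('a::field \<times> 'a \<Rightarrow> 'a \<times> 'a) \<Rightarrow> bool" where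
  "invertible_linear f \<longleftrightarrow>
     (\<exists>a b c d. a * d - b * c \<noteq> 0 \<and> f = (\<lambda>(x, y). (a * x + b * y, c * x + d * y)))"

end

theory Submission imports Defs begin

text \<open>Under the linear map with matrix [[a, b], [c, d]] the line t X - u Y + v = 0 goes to
  (c u + d t) X - (a u + b t) Y + (a d - b c) v = 0, so the coefficient vector (u, t) of a line
  is transformed by the map itself, up to the nonzero factor introduced by renormalising.
  The form of a quadrilateral is linear in the coefficient vector of each side, and a direct
  polynomial identity shows that transforming the four sides and both arguments by the map
  multiplies it by (a d - b c)^3. Hence the two forms differ by a nonzero constant, and
  orthogonality is preserved.\<close>

definition matrix_map :: "'a::comm_ring \<Rightarrow> 'a \<Rightarrow> 'a \<Rightarrow> 'a \<Rightarrow> 'a \<times> 'a \<Rightarrow> 'a \<times> 'a" where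
  "matrix_map a b c d = (\<lambda>(x, y). (a * x + b * y, c * x + d * y))"

lemma matrix_map_apply [simp]: "matrix_map a b c d (x, y) = (a * x + b * y, c * x + d * y)"
  by (simp add: matrix_map_def)

lemma invertible_linear_iff:
  "invertible_linear f \<longleftrightarrow> (\<exists>a b c d. a * d - b * c \<noteq> 0 \<and> f = matrix_map a b c d)"
  by (simp add: invertible_linear_def matrix_map_def)

definition line_vec :: "('a::field \<times> 'a) set \<Rightarrow> 'a \<times> 'a" where
  "line_vec L = (u_of L, t_of L)"

lemma q_orthogonal_iff_line_vec:
  "q_orthogonal A B A' B' l1 l2 \<longleftrightarrow> q_form A B A' B' (line_vec l1) (line_vec l2) = 0"
  by (simp add: q_orthogonal_def line_vec_def)

lemma line_eq_proportional:
  fixes t u v t' u' v' :: "'a::field"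
  assumes nz: "t \<noteq> 0 \<or> u \<noteq> 0" and nz': "t' \<noteq> 0 \<or> u' \<noteq> 0"
    and eq: "line_eq t u v = line_eq t' u' v'"
  shows "\<exists>k. k \<noteq> 0 \<and> t' = k * t \<and> u' = k * u \<and> v' = k * v"
proof (cases "u = 0")
  case False
  have "(0, v / u) \<in> line_eq t' u' v'" "(1, (t + v) / u) \<in> line_eq t' u' v'"
    using False eq[symmetric] by (auto simp: line_eq_def field_simps)
  then have e0: "- u' * (v / u) + v' = 0" and e1: "t' - u' * ((t + v) / u) + v' = 0"
    by (simp_all add: line_eq_def)
  have v': "v' = (u' / u) * v"
    using e0 by (simp add: field_simps)
  have t': "t' = (u' / u) * t"
    using e1 False unfolding v' by (simp add: field_simps)
  have "u' / u \<noteq> 0"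
    using nz' t' False by auto
  with t' v' False show ?thesis
    by (intro exI[of _ "u' / u"]) auto
next
  case True
  with nz have t: "t \<noteq> 0" by simp
  have "(- v / t, 0) \<in> line_eq t' u' v'" "(- v / t, 1) \<in> line_eq t' u' v'"
    using True t eq[symmetric] by (auto simp: line_eq_def field_simps)
  then have e0: "t' * (- v / t) + v' = 0" and e1: "t' * (- v / t) - u' + v' = 0"
    by (simp_all add: line_eq_def)
  have u': "u' = 0"
    using e0 e1 by (simp add: algebra_simps)
  have v': "v' = (t' / t) * v"
    using e0 t by (simp add: field_simps)
  have "t' / t \<noteq> 0"
    using nz' u' t by auto
  with u' v' True t show ?thesis
    by (intro exI[of _ "t' / t"]) auto
qed

lemma normalized_nonzero: "normalized t u \<Longrightarrow> t \<noteq> 0 \<or> u \<noteq> 0"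
  by (auto simp: normalized_def split: if_splits)

lemma normalized_eq_exists:
  fixes t u v :: "'a::field"
  assumes "t \<noteq> 0 \<or> u \<noteq> 0"
  shows "\<exists>t' u' v'. normalized t' u' \<and> line_eq t u v = line_eq t' u' v'"
proof (cases "u = 0")
  case True
  with assms have "line_eq t u v = line_eq 1 0 (v / t)"
    by (auto simp: line_eq_def field_simps)
  then show ?thesis
    by (metis normalized_def)
next
  case False
  then have "line_eq t u v = line_eq (t / u) 1 (v / u)"
    by (auto simp: line_eq_def field_simps)
  then show ?thesis
    by (metis normalized_def zero_neq_one)
qed

lemma normalized_eq_unique:
  assumes "normalized t u" "normalized t' u'" "line_eq t u v = line_eq t' u' v'"
  shows "(t, u, v) = (t', u', v')"
proof -
  obtain k where "k \<noteq> 0" "t' = k * t" "u' = k * u" "v' = k * v"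
    using line_eq_proportional[OF normalized_nonzero normalized_nonzero assms(3)] assms(1,2)
    by blast
  moreover from calculation assms(1,2) have "k = 1"
    by (auto simp: normalized_def split: if_splits)
  ultimately show ?thesis
    by simp
qed

lemma line_coeffs:
  fixes L :: "('a::field \<times> 'a) set"
  assumes "is_line L"
  shows "normalized (t_of L) (u_of L)" and "L = line_eq (t_of L) (u_of L) (v_of L)"
proof -
  let ?P = "\<lambda>(t, u, v). normalized t u \<and> L = line_eq t u (v::'a)"
  have "\<exists>!c. ?P c"
  proof (rule ex_ex1I)
    show "\<exists>c. ?P c"
      using assms normalized_eq_exists by (fastforce simp: is_line_def)
    show "c = c'" if "?P c" "?P c'" for c c'
      using that normalized_eq_unique by (clarsimp split: prod.splits) blast
  qed
  then have "?P (line_coeffs L)"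
    unfolding line_coeffs_def by (rule theI')
  then show "normalized (t_of L) (u_of L)" "L = line_eq (t_of L) (u_of L) (v_of L)"
    by (simp_all add: t_of_def u_of_def v_of_def split: prod.splits)
qed

lemma line_vec_of_line_eq:
  fixes L :: "('a::field \<times> 'a) set"
  assumes "t \<noteq> 0 \<or> u \<noteq> 0" "L = line_eq t u v"
  shows "\<exists>k. k \<noteq> 0 \<and> line_vec L = (k * u, k * t)"
proof -
  have "is_line L"
    using assms by (auto simp: is_line_def)
  then have "line_eq t u v = line_eq (t_of L) (u_of L) (v_of L)"
    using assms(2) line_coeffs(2) by metis
  with line_eq_proportional[OF assms(1) normalized_nonzero[OF line_coeffs(1)[OF \<open>is_line L\<close>]]]
  obtain k where "k \<noteq> 0" "t_of L = k * t" "u_of L = k * u"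
    by blast
  then show ?thesis
    by (auto simp: line_vec_def)
qed

lemma matrix_map_image_line_eq:
  fixes a b c d :: "'a::field"
  assumes det: "a * d - b * c \<noteq> 0"
  shows "matrix_map a b c d ` line_eq t u v
         = line_eq (c * u + d * t) (a * u + b * t) ((a * d - b * c) * v)"
proof -
  let ?D = "a * d - b * c"
  have equation: "(c * u + d * t) * (a * x + b * y) - (a * u + b * t) * (c * x + d * y) + ?D * v
      = ?D * (t * x - u * y + v)" for x y
    by (simp add: algebra_simps)
  have "p \<in> matrix_map a b c d ` line_eq t u v"
    if "p \<in> line_eq (c * u + d * t) (a * u + b * t) (?D * v)" for p
  proof -
    obtain X Y where p: "p = (X, Y)"
      by fastforce
    let ?x = "(d * X - b * Y) / ?D" and ?y = "(a * Y - c * X) / ?D"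
    have "a * (d * X - b * Y) + b * (a * Y - c * X) = ?D * X"
      "c * (d * X - b * Y) + d * (a * Y - c * X) = ?D * Y"
      by (simp_all add: algebra_simps)
    then have preimage: "matrix_map a b c d (?x, ?y) = p"
      using det p by (simp add: times_divide_eq_right add_divide_distrib[symmetric])
    then have "?D * (t * ?x - u * ?y + v) = 0"
      using that p equation[of ?x ?y] by (simp add: line_eq_def)
    then have "(?x, ?y) \<in> line_eq t u v"
      using det by (simp add: line_eq_def)
    with preimage show ?thesis
      by force
  qed
  then show ?thesis
    using det equation by (auto simp: line_eq_def)
qed

lemma matrix_map_image_line:
  fixes a b c d :: "'a::field" and L :: "('a \<times> 'a) set"
  assumes det: "a * d - b * c \<noteq> 0" and L: "is_line L"
  shows "is_line (matrix_map a b c d ` L)"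
    and "\<exists>k. k \<noteq> 0 \<and> line_vec (matrix_map a b c d ` L) = matrix_map a b c d (k * u_of L, k * t_of L)"
proof -
  let ?t = "c * u_of L + d * t_of L" and ?u = "a * u_of L + b * t_of L"
  have "(a * d - b * c) * u_of L = d * ?u - b * ?t" "(a * d - b * c) * t_of L = a * ?t - c * ?u"
    by (simp_all add: algebra_simps)
  then have nz: "?t \<noteq> 0 \<or> ?u \<noteq> 0"
    using det normalized_nonzero[OF line_coeffs(1)[OF L]] by auto
  have image: "matrix_map a b c d ` L = line_eq ?t ?u ((a * d - b * c) * v_of L)"
    using matrix_map_image_line_eq[OF det] line_coeffs(2)[OF L] by metis
  show "is_line (matrix_map a b c d ` L)"
    unfolding is_line_def image using nz by blast
  obtain k where "k \<noteq> 0" "line_vec (matrix_map a b c d ` L) = (k * ?u, k * ?t)"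
    using line_vec_of_line_eq[OF nz image] by blast
  then show "\<exists>k. k \<noteq> 0 \<and> line_vec (matrix_map a b c d ` L) = matrix_map a b c d (k * u_of L, k * t_of L)"
    by (intro exI[of _ k]) (simp add: algebra_simps)
qed

lemma q_form_scale:
  "q_form A B C D (k * x, k * y) (m * z, m * w) = k * m * q_form A B C D (x, y) (z, w)"
  by (simp add: q_form_def Let_def algebra_simps)

lemma q_form_matrix_map:
  fixes a b c d :: "'a::field"
  defines "M \<equiv> matrix_map a b c d"
  assumes "line_vec A2 = M (kA * u_of A, kA * t_of A)" "line_vec B2 = M (kB * u_of B, kB * t_of B)"
    "line_vec C2 = M (kC * u_of C, kC * t_of C)" "line_vec D2 = M (kD * u_of D, kD * t_of D)"
  shows "q_form A2 B2 C2 D2 (M v) (M w) = kA * kB * kC * kD * (a * d - b * c) ^ 3 * q_form A B C D v w"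
proof -
  obtain v1 v2 w1 w2 where vw: "v = (v1, v2)" "w = (w1, w2)"
    by fastforce
  have coeffs: "t_of A2 = kA * (c * u_of A + d * t_of A)" "u_of A2 = kA * (a * u_of A + b * t_of A)"
    "t_of B2 = kB * (c * u_of B + d * t_of B)" "u_of B2 = kB * (a * u_of B + b * t_of B)"
    "t_of C2 = kC * (c * u_of C + d * t_of C)" "u_of C2 = kC * (a * u_of C + b * t_of C)"
    "t_of D2 = kD * (c * u_of D + d * t_of D)" "u_of D2 = kD * (a * u_of D + b * t_of D)"
    using assms(2-5) by (simp_all add: M_def line_vec_def algebra_simps)
  show ?thesis
    unfolding vw M_def matrix_map_apply q_form_def q_alpha_def q_beta_def q_gamma_def Let_def
      fst_conv snd_conv coeffs
    by algebra
qed

lemma q_form_matrix_map_image: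
  fixes a b c d :: "'a::field"
  defines "M \<equiv> matrix_map a b c d"
  assumes det: "a * d - b * c \<noteq> 0"
    and lines: "is_line A" "is_line B" "is_line C" "is_line D"
  shows "\<exists>K. K \<noteq> 0 \<and> (\<forall>v w. q_form (M ` A) (M ` B) (M ` C) (M ` D) (M v) (M w) = K * q_form A B C D v w)"
proof -
  obtain kA kB kC kD where "kA \<noteq> 0" "kB \<noteq> 0" "kC \<noteq> 0" "kD \<noteq> 0"
    "line_vec (M ` A) = M (kA * u_of A, kA * t_of A)" "line_vec (M ` B) = M (kB * u_of B, kB * t_of B)"
    "line_vec (M ` C) = M (kC * u_of C, kC * t_of C)" "line_vec (M ` D) = M (kD * u_of D, kD * t_of D)"
    using matrix_map_image_line(2)[OF det] lines unfolding M_def by metis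
  with det show ?thesis
    unfolding M_def by (intro exI[of _ "kA * kB * kC * kD * (a * d - b * c) ^ 3"]) (simp add: q_form_matrix_map)
qed

lemma q_orthogonal_matrix_map_image:
  fixes a b c d :: "'a::field"
  defines "M \<equiv> matrix_map a b c d"
  assumes det: "a * d - b * c \<noteq> 0"
    and "is_line A" "is_line B" "is_line C" "is_line D"
    and lines: "is_line l1" "is_line l2"
  shows "q_orthogonal A B C D l1 l2 \<longleftrightarrow> q_orthogonal (M ` A) (M ` B) (M ` C) (M ` D) (M ` l1) (M ` l2)"
proof -
  obtain K where "K \<noteq> 0"
    and image: "\<And>v w. q_form (M ` A) (M ` B) (M ` C) (M ` D) (M v) (M w) = K * q_form A B C D v w"
    using q_form_matrix_map_image[OF det] assms(3-6) unfolding M_def by blast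
  moreover obtain k1 k2 where "k1 \<noteq> 0" "k2 \<noteq> 0"
    "line_vec (M ` l1) = M (k1 * u_of l1, k1 * t_of l1)" "line_vec (M ` l2) = M (k2 * u_of l2, k2 * t_of l2)"
    using matrix_map_image_line(2)[OF det] lines unfolding M_def by metis
  ultimately show ?thesis
    by (simp add: q_orthogonal_iff_line_vec q_form_scale) (simp add: line_vec_def)
qed

theorem proposition2p8:
  fixes A B A' B' :: "('a::field \<times> 'a) set"
    and f :: "'a \<times> 'a \<Rightarrow> 'a \<times> 'a"
  assumes char: "(2::'a) \<noteq> 0"
    and Q: "quadrilateral A B A' B'"
    and lin: "invertible_linear f"
  shows "(\<exists>c::'a. \<forall>v w. q_form A B A' B' v w
                  = c * q_form (f ` A) (f ` B) (f ` A') (f ` B') (f v) (f w))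
       \<and> (\<forall>l1 l2. is_line l1 \<longrightarrow> is_line l2 \<longrightarrow>
            (q_orthogonal A B A' B' l1 l2 \<longleftrightarrow>
             q_orthogonal (f ` A) (f ` B) (f ` A') (f ` B') (f ` l1) (f ` l2)))"
proof -
  obtain a b c d where det: "a * d - b * c \<noteq> 0" and f: "f = matrix_map a b c d"
    using lin by (auto simp: invertible_linear_iff)
  have sides: "is_line A" "is_line B" "is_line A'" "is_line B'"
    using Q by (auto simp: quadrilateral_def)
  then obtain K where "K \<noteq> 0"
    and "\<And>v w. q_form (f ` A) (f ` B) (f ` A') (f ` B') (f v) (f w) = K * q_form A B A' B' v w"
    using q_form_matrix_map_image[OF det] unfolding f by blast
  then have "\<forall>v w. q_form A B A' B' v w = inverse K * q_form (f ` A) (f ` B) (f ` A') (f ` B') (f v) (f w)"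
    by simp
  moreover have "\<forall>l1 l2. is_line l1 \<longrightarrow> is_line l2 \<longrightarrow>
      (q_orthogonal A B A' B' l1 l2 \<longleftrightarrow> q_orthogonal (f ` A) (f ` B) (f ` A') (f ` B') (f ` l1) (f ` l2))"
    using q_orthogonal_matrix_map_image[OF det sides] unfolding f by blast
  ultimately show ?thesis
    by blast
qed

end
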